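(* Let $m\ge0$ be an integer and write $s_n=s_n^{(1,m+2)}$. Then for all $n\ge0$ and $j=0,\ldots,m+1$, \[ s_{n(m+2)+j}^2=\delta_{j,0}+(1-\delta_{j,0})s_{j-1}^2+\sum_{k=1}^n\left\{s_{k(m+2)+j-1}^2+2\sum_{i=0}^{(k-1)(m+2)+j}P_{k(m+2)+j-1-i}^{\{-2,-1,m\}}s_i^2\right\}. \]
   Context: For positive integers $p<q$, $s_n^{(p,q)}$ is defined by $s_n^{(p,q)}=\delta_{0,n}+s_{n-p}^{(p,q)}+s_{n-q}^{(p,q)}$ for $n\ge0$ and $s_n^{(p,q)}=0$ for $n<0$. $\delta_{i,j}$ is $1$ if $i=j$ and $0$ otherwise. For a finite set $W$ of integers, $P_n^W$ is the number of permutations $\pi$ of $\{1,\dots,n\}$ with $\pi(i)-i\in W$ for all $i$ (the permanent of the $n\times n$ $(0,1)$ Toeplitz matrix whose $(i,j)$ entry is $1$ iff $j-i\in W$), with $P_0^W=1$. Empty sums are $0$. *)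

theory Defs
  imports "HOL-Combinatorics.Permutations"
begin

definition kdelta :: "int \<Rightarrow> int \<Rightarrow> int" where
  "kdelta i j = (if i = j then 1 else 0)"

function s_nat :: "nat \<Rightarrow> nat \<Rightarrow> nat \<Rightarrow> nat" where
  "s_nat p q n = (if n = 0 then 1 else 0)
      + (if 0 < p \<and> p \<le> n then s_nat p q (n - p) else 0)
      + (if 0 < q \<and> q \<le> n then s_nat p q (n - q) else 0)"
  by pat_completeness auto
termination by (relation "measure (\<lambda>(p,q,n). n)") auto

definition sseq :: "nat \<Rightarrow> nat \<Rightarrow> int \<Rightarrow> int" where
  "sseq p q n = (if n < 0 then 0 else int (s_nat p q (nat n)))"

definition Pperm :: "int set \<Rightarrow> nat \<Rightarrow> nat" where
  "Pperm W n = card {\<pi>. \<pi> permutes {1..n} \<and> (\<forall>i\<in>{1..n}. int (\<pi> i) - int i \<in> W)}"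

end

theory Submission
  imports Defs
begin

text \<open>Write s for s^(1,m+2) and W = {-2,-1,m}. Squaring s_N = s_(N-1) + s_(N-m-2) gives
  s_N^2 = s_(N-m-2)^2 + s_(N-1)^2 + 2 s_(N-1) s_(N-m-2), and summing over N = k(m+2)+j telescopes
  to the theorem once the cross term is shown to equal the sum over i of P^W_(N-1-i) s_i^2.
  For that, W-permutations are counted by choosing images from left to right: since no shift is
  below -2, the unused targets always form an interval with at most one hole, and the numbers of
  completions satisfy a recurrence in (hole position, length). Convolved with s_i^2, this recurrence
  is exactly the one satisfied by the products s_n s_(n-k), 0 \<le> k \<le> m+1; P^W_n is the case k = m+1.\<close>

lemma bij_betw_insert_iff:
  assumes "a \<notin> A"
  shows "bij_betw f (insert a A) B \<longleftrightarrow> f a \<in> B \<and> bij_betw f A (B - {f a})"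
  using assms unfolding bij_betw_def inj_on_insert by (auto simp: image_iff)

definition shift_bijections :: "int set \<Rightarrow> nat \<Rightarrow> nat \<Rightarrow> nat set \<Rightarrow> (nat \<Rightarrow> nat) set" where
  "shift_bijections W p L T = {f. bij_betw f {p..<p+L} T \<and> (\<forall>x. x \<notin> {p..<p+L} \<longrightarrow> f x = x)
      \<and> (\<forall>i\<in>{p..<p+L}. int (f i) - int i \<in> W)}"

lemma Pperm_eq_card_shift_bijections: "Pperm W n = card (shift_bijections W 1 n {1..n})"
proof -
  have "{1..<1+n} = {1..n}" by auto
  then have "{\<pi>. \<pi> permutes {1..n} \<and> (\<forall>i\<in>{1..n}. int (\<pi> i) - int i \<in> W)}
      = shift_bijections W 1 n {1..n}"
    unfolding shift_bijections_def
    by (auto intro: bij_imp_permutes dest: permutes_imp_bij permutes_not_in)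
  then show ?thesis by (simp add: Pperm_def)
qed

lemma finite_shift_bijections:
  assumes "finite T" shows "finite (shift_bijections W p L T)"
proof -
  let ?P = "{p..<p+L}"
  have "inj_on (\<lambda>f. restrict f ?P) (shift_bijections W p L T)"
  proof (rule inj_onI)
    fix f g assume "f \<in> shift_bijections W p L T" "g \<in> shift_bijections W p L T"
      and "restrict f ?P = restrict g ?P"
    then have "f x = g x" for x
      by (cases "x \<in> ?P") (auto simp: shift_bijections_def dest: fun_cong[where x = x])
    then show "f = g" ..
  qed
  moreover have "(\<lambda>f. restrict f ?P) ` shift_bijections W p L T \<subseteq> (\<Pi>\<^sub>E i\<in>?P. T)"
    by (auto simp: shift_bijections_def bij_betw_def)
  ultimately show ?thesis
    using assms by (metis finite_PiE finite_atLeastLessThan finite_imageD finite_subset)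
qed

lemma shift_bijections_0: "shift_bijections W p 0 T = (if T = {} then {id} else {})"
  by (auto simp: shift_bijections_def bij_betw_def fun_eq_iff)

lemma shift_bijections_eq_empty_if_unreachable:
  assumes "t \<in> T" "\<forall>w\<in>W. int t < int p + w" shows "shift_bijections W p L T = {}"
proof (rule ccontr)
  assume "shift_bijections W p L T \<noteq> {}"
  then obtain f where f: "f \<in> shift_bijections W p L T" by blast
  then obtain i where i: "i \<in> {p..<p+L}" "f i = t"
    using assms(1) by (auto simp: shift_bijections_def bij_betw_def)
  with f have "int t - int i \<in> W" by (auto simp: shift_bijections_def)
  with i assms(2) show False by fastforce
qed

lemma card_shift_bijections_fix_first:
  assumes t: "t \<in> T" "int t - int p \<in> W"
  shows "card {f \<in> shift_bijections W p (Suc L) T. f p = t} = card (shift_bijections W (Suc p) L (T - {t}))"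
proof (rule bij_betw_same_card, rule bij_betw_byWitness[where f'="\<lambda>g. g(p := t)"])
  have window: "{p..<p + Suc L} = insert p {Suc p..<Suc p + L}" by auto
  show "(\<lambda>f. f(p := p)) ` {f \<in> shift_bijections W p (Suc L) T. f p = t}
      \<subseteq> shift_bijections W (Suc p) L (T - {t})"
  proof (rule image_subsetI)
    fix f assume "f \<in> {f \<in> shift_bijections W p (Suc L) T. f p = t}"
    then have f: "f \<in> shift_bijections W p (Suc L) T" "f p = t" by auto
    then have "bij_betw f {Suc p..<Suc p + L} (T - {t})"
      unfolding shift_bijections_def window by (simp add: bij_betw_insert_iff)
    with f show "f(p := p) \<in> shift_bijections W (Suc p) L (T - {t})"
      unfolding shift_bijections_def window by (auto intro: bij_betw_cong[THEN iffD1, rotated])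
  qed
  show "(\<lambda>g. g(p := t)) ` shift_bijections W (Suc p) L (T - {t})
      \<subseteq> {f \<in> shift_bijections W p (Suc L) T. f p = t}"
  proof (rule image_subsetI)
    fix g assume g: "g \<in> shift_bijections W (Suc p) L (T - {t})"
    then have "bij_betw (g(p := t)) {Suc p..<Suc p + L} (T - {t})"
      unfolding shift_bijections_def by (auto intro: bij_betw_cong[THEN iffD1, rotated])
    then have "bij_betw (g(p := t)) {p..<p + Suc L} T"
      unfolding window using t by (simp add: bij_betw_insert_iff insert_absorb)
    with g t show "g(p := t) \<in> {f \<in> shift_bijections W p (Suc L) T. f p = t}"
      unfolding shift_bijections_def window by auto
  qed
qed (auto simp: shift_bijections_def fun_eq_iff)

lemma card_shift_bijections_Suc:
  assumes "finite T"
  shows "card (shift_bijections W p (Suc L) T)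
    = (\<Sum>t \<in> {t \<in> T. int t - int p \<in> W}. card (shift_bijections W (Suc p) L (T - {t})))"
proof -
  let ?C = "{t \<in> T. int t - int p \<in> W}"
  let ?F = "\<lambda>t. {f \<in> shift_bijections W p (Suc L) T. f p = t}"
  have "shift_bijections W p (Suc L) T = (\<Union>t\<in>?C. ?F t)"
    by (auto simp: shift_bijections_def bij_betw_def)
  also have "card \<dots> = (\<Sum>t\<in>?C. card (?F t))"
    using assms by (intro card_UN_disjoint) (auto simp: finite_shift_bijections)
  also have "\<dots> = (\<Sum>t\<in>?C. card (shift_bijections W (Suc p) L (T - {t})))"
    by (rule sum.cong) (auto intro: card_shift_bijections_fix_first)
  finally show ?thesis .
qed

text \<open>Target p can only be the image of position p+2, the first position of the window.\<close>

lemma card_shift_bijections_forced: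
  assumes "finite T" "p \<in> T" "-2 \<in> W" "\<forall>w\<in>W. -2 \<le> w"
  shows "card (shift_bijections W (p+2) (Suc L) T) = card (shift_bijections W (p+3) L (T - {p}))"
proof -
  have "card (shift_bijections W (p+2) (Suc L) T)
      = (\<Sum>t \<in> {t \<in> T. int t - int (p+2) \<in> W}. card (shift_bijections W (Suc (p+2)) L (T - {t})))"
    by (rule card_shift_bijections_Suc[OF assms(1)])
  also have "\<dots> = (\<Sum>t \<in> {p}. card (shift_bijections W (Suc (p+2)) L (T - {t})))"
  proof (rule sum.mono_neutral_right, rule_tac [3] ballI)
    fix t assume "t \<in> {t \<in> T. int t - int (p+2) \<in> W} - {p}"
    then have "shift_bijections W (Suc (p+2)) L (T - {t}) = {}"
      using assms by (intro shift_bijections_eq_empty_if_unreachable[of p]) fastforce+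
    then show "card (shift_bijections W (Suc (p+2)) L (T - {t})) = 0" by simp
  qed (use assms in auto)
  finally show ?thesis by (simp add: eval_nat_numeral)
qed

lemma card_shift_bijections_forced_run:
  assumes "finite T" "{p..<p+k} \<subseteq> T" "k \<le> L" "-2 \<in> W" "\<forall>w\<in>W. -2 \<le> w"
  shows "card (shift_bijections W (p+2) L T) = card (shift_bijections W (p+2+k) (L-k) (T - {p..<p+k}))"
  using assms(1-3)
proof (induction k arbitrary: p L T)
  case 0
  then show ?case by simp
next
  case (Suc k)
  then obtain L' where L: "L = Suc L'" by (metis Suc_le_D)
  have "p \<in> T" using Suc.prems(2) by auto
  then have "card (shift_bijections W (p+2) L T) = card (shift_bijections W (p+1+2) L' (T - {p}))"
    using card_shift_bijections_forced[OF Suc.prems(1) _ assms(4,5), of p L']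
    unfolding L by (simp add: eval_nat_numeral)
  also have "\<dots> = card (shift_bijections W (p+1+2+k) (L'-k) (T - {p} - {p+1..<p+1+k}))"
    using Suc.prems L by (intro Suc.IH) auto
  also have "T - {p} - {p+1..<p+1+k} = T - {p..<p + Suc k}" by auto
  finally show ?case using L by simp
qed

text \<open>Only 1 \<le> k \<le> m+1 has a combinatorial meaning (card_hole_bijections_eq_hole_count);
  the value at k = 0 just makes the recurrence uniform in k.\<close>

function hole_count :: "nat \<Rightarrow> nat \<Rightarrow> nat \<Rightarrow> nat" where
  "hole_count m 0 n = (if n = 0 then 1 else 0)"
| "hole_count m (Suc k) n =
     (if n \<le> k then 0 else hole_count m k (n - 1) + hole_count m (m + 1 - k) (n - Suc k))"
  by pat_completeness auto
termination by (relation "measure (\<lambda>(m, k, n). n)") auto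

declare hole_count.simps(2) [simp del]

lemma hole_count_eq_0: "0 < k \<Longrightarrow> n < k \<Longrightarrow> hole_count m k n = 0"
  by (cases k) (auto simp: hole_count.simps(2))

lemma hole_count_Suc:
  "k < n \<Longrightarrow> hole_count m (Suc k) n = hole_count m k (n - 1) + hole_count m (m + 1 - k) (n - Suc k)"
  by (simp add: hole_count.simps(2))

definition hole_bijections :: "nat \<Rightarrow> nat \<Rightarrow> nat \<Rightarrow> nat \<Rightarrow> (nat \<Rightarrow> nat) set" where
  "hole_bijections m a h L = shift_bijections {-2, -1, int m} (a+1) L ({a..a+L} - {a+h})"

lemma card_hole_bijections_Suc:
  assumes "h \<le> m"
  shows "card (hole_bijections m a h (Suc L)) =
    (if h = 0 then 0 else card (hole_bijections m (a+1) (h-1) L))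
    + (if m \<le> L then card (hole_bijections m (a+h+1) (m-h) (L-h)) else 0)"
proof -
  define T where "T = {a..a + Suc L} - {a+h}"
  let ?g = "\<lambda>t. card (shift_bijections {-2, -1, int m} (a+2) L (T - {t}))"
  have "{t \<in> T. int t - int (a+1) \<in> {-2, -1, int m}}
      = (if h = 0 then {} else {a}) \<union> (if m \<le> L then {a+1+m} else {})"
    using assms by (auto simp: T_def)
  then have split: "card (hole_bijections m a h (Suc L))
      = (if h = 0 then 0 else ?g a) + (if m \<le> L then ?g (a+1+m) else 0)"
    using card_shift_bijections_Suc[of T "{-2, -1, int m}" "a+1" L]
    by (simp add: hole_bijections_def T_def sum.union_disjoint)
  have lower: "h \<noteq> 0 \<Longrightarrow> ?g a = card (hole_bijections m (a+1) (h-1) L)"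
  proof -
    assume "h \<noteq> 0"
    then have "T - {a} = {a+1..a+1+L} - {a+1+(h-1)}" by (auto simp: T_def)
    then show ?thesis by (simp add: hole_bijections_def)
  qed
  have upper: "m \<le> L \<Longrightarrow> ?g (a+1+m) = card (hole_bijections m (a+h+1) (m-h) (L-h))"
  proof -
    assume "m \<le> L"
    then have "?g (a+1+m) = card (shift_bijections {-2, -1, int m} (a+2+h) (L-h) (T - {a+1+m} - {a..<a+h}))"
      using assms by (intro card_shift_bijections_forced_run) (auto simp: T_def)
    also have "T - {a+1+m} - {a..<a+h} = {a+h+1..a+h+1+(L-h)} - {a+h+1+(m-h)}"
      using assms \<open>m \<le> L\<close> by (auto simp: T_def)
    finally show ?thesis by (simp add: hole_bijections_def add.commute add.left_commute)
  qed
  show ?thesis using split lower upper by simp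
qed

lemma card_hole_bijections_eq_hole_count:
  "h \<le> m \<Longrightarrow> card (hole_bijections m a h L) = hole_count m (Suc h) (Suc L)"
proof (induction L arbitrary: a h rule: less_induct)
  case (less L)
  show ?case
  proof (cases L)
    case 0
    have "card (hole_bijections m a h 0) = (if h = 0 then 1 else 0)"
      by (simp add: hole_bijections_def shift_bijections_0)
    then show ?thesis using 0 by (cases "h = 0") (simp_all add: hole_count_eq_0 hole_count_Suc)
  next
    case (Suc L')
    have "card (hole_bijections m a h L) =
        (if h = 0 then 0 else hole_count m h L)
        + (if m \<le> L' then hole_count m (Suc (m-h)) (Suc (L'-h)) else 0)"
      using less Suc by (simp add: card_hole_bijections_Suc Suc_diff_le)
    also have "\<dots> = hole_count m h L + hole_count m (m + 1 - h) (L - h)"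
      using less.prems Suc by (auto simp: hole_count_eq_0 Suc_diff_le)
    also have "\<dots> = hole_count m (Suc h) (Suc L)"
      using less.prems by (auto simp: hole_count.simps(2) hole_count_eq_0)
    finally show ?thesis .
  qed
qed

lemma Pperm_eq_hole_count: "0 < n \<Longrightarrow> Pperm {-2, -1, int m} n = hole_count m (m+1) n"
proof -
  assume "0 < n"
  have "{0..0+n} - {0+0} = {1..n}" by auto
  then have "Pperm {-2, -1, int m} n = card (hole_bijections m 0 0 n)"
    by (simp add: Pperm_eq_card_shift_bijections hole_bijections_def)
  also have "\<dots> = hole_count m 1 (Suc n)"
    by (simp add: card_hole_bijections_eq_hole_count)
  finally show ?thesis using \<open>0 < n\<close> by (simp add: hole_count_Suc)
qed

declare s_nat.simps [simp del]

abbreviation gfib :: "nat \<Rightarrow> nat \<Rightarrow> nat" where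
  "gfib m \<equiv> s_nat 1 (m+2)"

lemma gfib_0: "gfib m 0 = 1"
  by (subst s_nat.simps) simp

lemma gfib_rec: "0 < n \<Longrightarrow> gfib m n = gfib m (n-1) + (if m+2 \<le> n then gfib m (n-(m+2)) else 0)"
  by (subst s_nat.simps) simp

lemma gfib_initial: "n < m+2 \<Longrightarrow> gfib m n = 1"
proof (induction n)
  case 0
  show ?case by (rule gfib_0)
next
  case (Suc n)
  then show ?case using gfib_rec[of "Suc n" m] by simp
qed

text \<open>Both sides satisfy the recurrence of hole_count in (k, n).\<close>

lemma gfib_mult_eq_sum_hole_count:
  "k \<le> m+1 \<Longrightarrow> k \<le> n \<Longrightarrow>
    gfib m n * gfib m (n-k) = (\<Sum>i=0..n-k. gfib m i ^ 2 * hole_count m k (n-i))"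
proof (induction n arbitrary: k rule: less_induct)
  case (less n)
  show ?case
  proof (cases k)
    case 0
    have "(\<Sum>i=0..n. gfib m i ^ 2 * hole_count m 0 (n-i)) = (\<Sum>i=0..n. if i = n then gfib m i ^ 2 else 0)"
      by (rule sum.cong) auto
    then show ?thesis using 0 by (simp add: power2_eq_square)
  next
    case (Suc k')
    with less.prems have "0 < n" by simp
    have split: "(\<Sum>i=0..n-k. gfib m i ^ 2 * hole_count m k (n-i)) =
        (\<Sum>i=0..n-k. gfib m i ^ 2 * hole_count m k' (n-1-i))
        + (\<Sum>i=0..n-k. gfib m i ^ 2 * hole_count m (m+1-k') (n-k-i))"
      unfolding sum.distrib[symmetric]
      by (rule sum.cong) (use Suc less.prems in \<open>auto simp: hole_count_Suc algebra_simps\<close>)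
    have low: "(\<Sum>i=0..n-k. gfib m i ^ 2 * hole_count m k' (n-1-i)) = gfib m (n-1) * gfib m (n-k)"
      using less.IH[of "n-1" k'] Suc less.prems by simp
    have high: "(\<Sum>i=0..n-k. gfib m i ^ 2 * hole_count m (m+1-k') (n-k-i)) =
        (if m+2 \<le> n then gfib m (n-(m+2)) * gfib m (n-k) else 0)"
    proof (cases "m+2 \<le> n")
      case True
      have "(\<Sum>i=0..n-k. gfib m i ^ 2 * hole_count m (m+1-k') (n-k-i))
          = (\<Sum>i=0..n-(m+2). gfib m i ^ 2 * hole_count m (m+1-k') (n-k-i))"
        by (rule sum.mono_neutral_right) (use Suc less.prems in \<open>auto simp: hole_count_eq_0\<close>)
      also have "\<dots> = gfib m (n-k) * gfib m (n-(m+2))"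
        using less.IH[of "n-k" "m+1-k'"] Suc less.prems True by simp
      finally show ?thesis using True by simp
    next
      case False
      have "(\<Sum>i=0..n-k. gfib m i ^ 2 * hole_count m (m+1-k') (n-k-i)) = 0"
        by (intro sum.neutral) (use False Suc less.prems in \<open>auto simp: hole_count_eq_0\<close>)
      with False show ?thesis by simp
    qed
    show ?thesis
      using split low high gfib_rec[OF \<open>0 < n\<close>, of m] by (simp add: algebra_simps)
  qed
qed

lemma gfib_square_step:
  assumes "m+2 \<le> N"
  shows "gfib m N ^ 2 = gfib m (N-(m+2)) ^ 2 + gfib m (N-1) ^ 2
    + 2 * (\<Sum>i=0..N-(m+2). Pperm {-2, -1, int m} (N-1-i) * gfib m i ^ 2)"
proof -
  have "gfib m (N-1) * gfib m (N-(m+2)) = (\<Sum>i=0..N-(m+2). gfib m i ^ 2 * hole_count m (m+1) (N-1-i))"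
    using gfib_mult_eq_sum_hole_count[of "m+1" m "N-1"] assms by (simp add: diff_diff_add)
  also have "\<dots> = (\<Sum>i=0..N-(m+2). Pperm {-2, -1, int m} (N-1-i) * gfib m i ^ 2)"
    by (rule sum.cong) (use assms in \<open>auto simp: Pperm_eq_hole_count\<close>)
  finally show ?thesis
    using gfib_rec[of N m] assms by (simp add: power2_eq_square algebra_simps)
qed

lemma sseq_of_nat: "sseq 1 (m+2) (int n) = int (gfib m n)"
  by (simp add: sseq_def)

lemma sseq_square_step:
  assumes "m+2 \<le> N"
  shows "(sseq 1 (m+2) (int N))^2 = (sseq 1 (m+2) (int (N-(m+2))))^2 + (sseq 1 (m+2) (int N - 1))^2
    + 2 * (\<Sum>i=0..N-(m+2). int (Pperm {-2, -1, int m} (N-1-i)) * (sseq 1 (m+2) (int i))^2)"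
proof -
  have pred: "int N - 1 = int (N-1)" using assms by simp
  show ?thesis
    unfolding pred sseq_of_nat using arg_cong[OF gfib_square_step[OF assms], of int]
    by (simp only: of_nat_add of_nat_mult of_nat_sum of_nat_power of_nat_numeral)
qed

theorem mainTheorem8:
  fixes m n j :: nat
  assumes "j \<le> m + 1"
  shows "(sseq 1 (m+2) (int (n*(m+2) + j)))^2 =
           kdelta (int j) 0 + (1 - kdelta (int j) 0) * (sseq 1 (m+2) (int j - 1))^2
           + (\<Sum>k = 1..n. (sseq 1 (m+2) (int (k*(m+2) + j) - 1))^2
               + 2 * (\<Sum>i = 0..(k-1)*(m+2) + j.
                        int (Pperm {-2, -1, int m} (k*(m+2) + j - 1 - i))
                        * (sseq 1 (m+2) (int i))^2))"
proof (induction n)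
  case 0
  have "gfib m j = 1" "gfib m (j-1) = 1"
    using assms by (intro gfib_initial; simp)+
  then show ?case
    by (cases "j = 0") (simp_all add: sseq_def kdelta_def nat_diff_distrib')
next
  case (Suc n)
  have "Suc n * (m+2) + j - (m+2) = n * (m+2) + j" by simp
  with Suc.IH show ?case
    using sseq_square_step[of m "Suc n * (m+2) + j"] by (simp only: sum.cl_ivl_Suc) simp
qed

end
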